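(* Every domain-complete space is convergence Choquet-complete. Every LCS-complete space is compactly Choquet-complete.
   Context: A space is domain-complete (resp. LCS-complete) if it is homeomorphic to a $G_\delta$ subset (countable intersection of open sets), with the subspace topology, of some continuous dcpo with its Scott topology (resp. of some locally compact sober space, locally compact meaning every point has a neighborhood base of compact saturated sets). The strong Choquet game on a space $X$: players $\beta$ and $\alpha$ alternate; at round $n$, $\beta$ picks a point $x_n$ and an open neighborhood $V_n$ of $x_n$ with $V_n\subseteq U_{n-1}$ (when $n\ge1$), and then $\alpha$ picks an open set $U_n$ with $x_n\in U_n\subseteq V_n$; $\alpha$'s strategies may depend on the entire history of the play. $X$ is Choquet-complete if $\alpha$ has a strategy ensuring $\bigcap_n U_n\neq\emptyset$; convergence Choquet-complete if $\alpha$ has a strategy ensuring that $(U_n)_{n\in\mathbb N}$ is a base of open neighborhoods of some point; compactly Choquet-complete if $\alpha$ has a strategy ensuring that $(U_n)_{n\in\mathbb N}$ is a base of open neighborhoods of some non-empty compact saturated set (i.e. every open set containing that set contains some $U_n$, and the set is contained in every $U_n$). *)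

theory Defs
  imports "HOL-Analysis.Analysis"
begin

definition directed :: "'a::order set \<Rightarrow> bool" where
  "directed D \<longleftrightarrow> D \<noteq> {} \<and> (\<forall>x\<in>D. \<forall>y\<in>D. \<exists>z\<in>D. x \<le> z \<and> y \<le> z)"

definition is_lub :: "'a::order set \<Rightarrow> 'a \<Rightarrow> bool" where
  "is_lub D s \<longleftrightarrow> (\<forall>x\<in>D. x \<le> s) \<and> (\<forall>u. (\<forall>x\<in>D. x \<le> u) \<longrightarrow> s \<le> u)"

definition dcpo :: "'a::order itself \<Rightarrow> bool" where
  "dcpo _ \<longleftrightarrow> (\<forall>D::'a set. directed D \<longrightarrow> (\<exists>s. is_lub D s))"

definition way_below :: "'a::order \<Rightarrow> 'a \<Rightarrow> bool" where
  "way_below x y \<longleftrightarrow>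
     (\<forall>D s. directed D \<longrightarrow> is_lub D s \<longrightarrow> y \<le> s \<longrightarrow> (\<exists>d\<in>D. x \<le> d))"

definition continuous_dcpo :: "'a::order itself \<Rightarrow> bool" where
  "continuous_dcpo T \<longleftrightarrow> dcpo T \<and>
     (\<forall>x::'a. directed {y. way_below y x} \<and> is_lub {y. way_below y x} x)"

definition scott_open :: "'a::order set \<Rightarrow> bool" where
  "scott_open U \<longleftrightarrow> (\<forall>x y. x \<in> U \<longrightarrow> x \<le> y \<longrightarrow> y \<in> U) \<and>
     (\<forall>D s. directed D \<longrightarrow> is_lub D s \<longrightarrow> s \<in> U \<longrightarrow> D \<inter> U \<noteq> {})"

lemma istopology_scott_open: "istopology (scott_open :: 'a::order set \<Rightarrow> bool)"
  unfolding istopology_def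
proof (intro conjI allI impI ballI)
  fix S T :: "'a set"
  assume S: "scott_open S" and T: "scott_open T"
  show "scott_open (S \<inter> T)"
    unfolding scott_open_def
  proof (intro conjI allI impI)
    fix x y assume "x \<in> S \<inter> T" "x \<le> y"
    then show "y \<in> S \<inter> T" using S T unfolding scott_open_def by blast
  next
    fix D s assume D: "directed D" and s: "is_lub D s" and sin: "s \<in> S \<inter> T"
    obtain a where a: "a \<in> D" "a \<in> S" using S D s sin unfolding scott_open_def by blast
    obtain b where b: "b \<in> D" "b \<in> T" using T D s sin unfolding scott_open_def by blast
    obtain c where c: "c \<in> D" "a \<le> c" "b \<le> c" using D a b unfolding directed_def by blast
    have "c \<in> S" "c \<in> T" using S T a b c unfolding scott_open_def by blast+
    then show "D \<inter> (S \<inter> T) \<noteq> {}" using c by blast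
  qed
next
  fix K :: "'a set set"
  assume K: "\<forall>U\<in>K. scott_open U"
  show "scott_open (\<Union>K)"
    unfolding scott_open_def
  proof (intro conjI allI impI)
    fix x y assume "x \<in> \<Union>K" "x \<le> y"
    then show "y \<in> \<Union>K" using K unfolding scott_open_def by blast
  next
    fix D s assume "directed D" "is_lub D s" "s \<in> \<Union>K"
    then show "D \<inter> \<Union>K \<noteq> {}" using K unfolding scott_open_def by blast
  qed
qed

definition scott_topology :: "'a::order topology" where
  "scott_topology = topology scott_open"

lemma openin_scott_topology: "openin (scott_topology :: 'a::order topology) U \<longleftrightarrow> scott_open U"
  unfolding scott_topology_def
  using topology_inverse'[OF istopology_scott_open[where 'a='a]] by simp

definition saturated_in :: "'a topology \<Rightarrow> 'a set \<Rightarrow> bool" where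
  "saturated_in X Q \<longleftrightarrow> Q \<subseteq> topspace X \<and> Q = \<Inter>{U. openin X U \<and> Q \<subseteq> U}"

definition irreducible_closed_in :: "'a topology \<Rightarrow> 'a set \<Rightarrow> bool" where
  "irreducible_closed_in X F \<longleftrightarrow> closedin X F \<and> F \<noteq> {} \<and>
     (\<forall>A B. closedin X A \<longrightarrow> closedin X B \<longrightarrow> F \<subseteq> A \<union> B \<longrightarrow> F \<subseteq> A \<or> F \<subseteq> B)"

definition sober_space :: "'a topology \<Rightarrow> bool" where
  "sober_space X \<longleftrightarrow> (\<forall>F. irreducible_closed_in X F \<longrightarrow>
      (\<exists>!x. x \<in> topspace X \<and> F = X closure_of {x}))"

definition locally_compact_sat :: "'a topology \<Rightarrow> bool" where
  "locally_compact_sat X \<longleftrightarrow> (\<forall>x\<in>topspace X. \<forall>U. openin X U \<and> x \<in> U \<longrightarrow>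
      (\<exists>Q. compactin X Q \<and> saturated_in X Q \<and> x \<in> X interior_of Q \<and> Q \<subseteq> U))"

text \<open>A strategy for player alpha maps the history of all previous rounds
  (triples \<open>(x_i, V_i, U_i)\<close>) and the current move \<open>(x_n, V_n)\<close> of beta
  to alpha's answer \<open>U_n\<close>.\<close>
type_synonym 'a alpha_strategy = "('a \<times> 'a set \<times> 'a set) list \<Rightarrow> 'a \<Rightarrow> 'a set \<Rightarrow> 'a set"

definition beta_legal :: "'a topology \<Rightarrow> (nat \<Rightarrow> 'a) \<Rightarrow> (nat \<Rightarrow> 'a set) \<Rightarrow> (nat \<Rightarrow> 'a set) \<Rightarrow> nat \<Rightarrow> bool" where
  "beta_legal X x V U k \<longleftrightarrow> x k \<in> topspace X \<and> openin X (V k) \<and> x k \<in> V k \<and>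
     (k > 0 \<longrightarrow> V k \<subseteq> U (k - 1))"

definition alpha_wins_with :: "'a topology \<Rightarrow> 'a alpha_strategy \<Rightarrow> ((nat \<Rightarrow> 'a set) \<Rightarrow> bool) \<Rightarrow> bool" where
  "alpha_wins_with X \<sigma> W \<longleftrightarrow> (\<forall>x V U.
     (\<forall>n. U n = \<sigma> (map (\<lambda>i. (x i, V i, U i)) [0..<n]) (x n) (V n)) \<longrightarrow>
     (\<forall>n. (\<forall>k\<le>n. beta_legal X x V U k) \<longrightarrow> openin X (U n) \<and> x n \<in> U n \<and> U n \<subseteq> V n) \<and>
     ((\<forall>n. beta_legal X x V U n) \<longrightarrow> W U))"

definition choquet_complete :: "'a topology \<Rightarrow> bool" where
  "choquet_complete X \<longleftrightarrow> (\<exists>\<sigma>. alpha_wins_with X \<sigma> (\<lambda>U. (\<Inter>n. U n) \<noteq> {}))"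

definition convergence_choquet_complete :: "'a topology \<Rightarrow> bool" where
  "convergence_choquet_complete X \<longleftrightarrow> (\<exists>\<sigma>. alpha_wins_with X \<sigma> (\<lambda>U.
     \<exists>p\<in>topspace X. (\<forall>n. p \<in> U n) \<and> (\<forall>W. openin X W \<and> p \<in> W \<longrightarrow> (\<exists>n. U n \<subseteq> W))))"

definition compactly_choquet_complete :: "'a topology \<Rightarrow> bool" where
  "compactly_choquet_complete X \<longleftrightarrow> (\<exists>\<sigma>. alpha_wins_with X \<sigma> (\<lambda>U.
     \<exists>Q. Q \<noteq> {} \<and> compactin X Q \<and> saturated_in X Q \<and> (\<forall>n. Q \<subseteq> U n) \<and>
         (\<forall>W. openin X W \<and> Q \<subseteq> W \<longrightarrow> (\<exists>n. U n \<subseteq> W))))"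

end

theory Submission
  imports Defs
begin

text \<open>
  In both cases player alpha keeps a private token besides the open sets it plays: a point
  \<open>y\<^sub>n\<close> way below beta's point (domain case), resp. a compact saturated neighbourhood
  \<open>K\<^sub>n\<close> of it (LCS case), chosen inside beta's open set, inside the \<open>n\<close>-th open set of the
  \<open>G\<^sub>\<delta>\<close> presentation, and way above, resp. inside the interior of, the previous token;
  alpha answers with \<open>\<Up>y\<^sub>n\<close>, resp. the interior of \<open>K\<^sub>n\<close>.
  The tokens form a \<open>\<ll>\<close>-chain whose supremum lies in the \<open>G\<^sub>\<delta>\<close> set and has
  alpha's moves as a neighbourhood base, resp. a chain of compact saturated sets whose
  intersection is, by well-filteredness of sober spaces, a compact saturated set with alpha's
  moves as a neighbourhood base. Homeomorphisms transport such strategies.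
\<close>

text \<open>
  A shrinking rule describes a strategy for alpha that carries a token \<open>t\<close> from round to
  round and answers with the open set \<open>N t\<close>: in round \<open>n\<close>, given the previous token
  (\<open>None\<close> in round 0) whose open set contains beta's point \<open>a\<close>, and beta's open set \<open>B\<close>,
  some token \<open>t\<close> related by \<open>R n\<close> to the previous one has \<open>a \<in> N t \<subseteq> B\<close>.
\<close>
definition shrinking_rule ::
    "'a topology \<Rightarrow> ('t \<Rightarrow> 'a set) \<Rightarrow> (nat \<Rightarrow> 't option \<Rightarrow> 't \<Rightarrow> bool) \<Rightarrow> bool" where
  "shrinking_rule S N R \<longleftrightarrow> (\<forall>t. openin S (N t)) \<and>
     (\<forall>n prev a B. openin S B \<and> a \<in> B \<and> (\<forall>p. prev = Some p \<longrightarrow> a \<in> N p) \<longrightarrow>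
        (\<exists>t. R n prev t \<and> a \<in> N t \<and> N t \<subseteq> B))"

lemma alpha_wins_with_shrinking_rule:
  assumes rule: "shrinking_rule S N R"
    and win: "\<And>t. R 0 None (t 0) \<Longrightarrow> (\<And>n. R (Suc n) (Some (t n)) (t (Suc n))) \<Longrightarrow> W (\<lambda>n. N (t n))"
  shows "\<exists>\<sigma>. alpha_wins_with S \<sigma> W"
proof -
  have "\<forall>n prev a B. \<exists>t. openin S B \<and> a \<in> B \<and> (\<forall>p. prev = Some p \<longrightarrow> a \<in> N p) \<longrightarrow>
          R n prev t \<and> a \<in> N t \<and> N t \<subseteq> B"
    using rule unfolding shrinking_rule_def by blast
  then obtain pick where pick: "\<And>n prev a B. openin S B \<Longrightarrow> a \<in> B \<Longrightarrow> (\<And>p. prev = Some p \<Longrightarrow> a \<in> N p) \<Longrightarrow>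
      R n prev (pick n prev a B) \<and> a \<in> N (pick n prev a B) \<and> N (pick n prev a B) \<subseteq> B"
    by metis
  \<comment> \<open>the current token is recomputed from the history by replaying \<open>pick\<close> along it\<close>
  define step where "step = (\<lambda>(n, prev) (a, B, _ :: 'a set). (Suc n, Some (pick n prev a B)))"
  define \<sigma> :: "'a alpha_strategy"
    where "\<sigma> = (\<lambda>h a B. N (pick (length h) (snd (foldl step (0, None) h)) a B))"
  have "alpha_wins_with S \<sigma> W"
    unfolding alpha_wins_with_def
  proof (intro allI impI conjI)
    fix x V U
    assume U: "\<forall>n. U n = \<sigma> (map (\<lambda>i. (x i, V i, U i)) [0..<n]) (x n) (V n)"
    define state where "state n = foldl step (0, None) (map (\<lambda>i. (x i, V i, U i)) [0..<n])" for n
    define t where "t n = pick n (snd (state n)) (x n) (V n)" for n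
    have state: "state n = (n, if n = 0 then None else Some (t (n - 1)))" for n
      by (induction n) (simp_all add: state_def t_def step_def)
    have U_t: "U n = N (t n)" for n
      using U[rule_format, of n]
      by (simp only: \<sigma>_def t_def state_def length_map length_upt diff_zero)
    have legal: "R n (snd (state n)) (t n) \<and> x n \<in> U n \<and> U n \<subseteq> V n" if "beta_legal S x V U n" for n
      unfolding U_t t_def
      by (rule pick) (use that in \<open>auto simp: beta_legal_def state U_t split: if_split_asm\<close>)
    show "openin S (U n)" "x n \<in> U n" "U n \<subseteq> V n" if "\<forall>k\<le>n. beta_legal S x V U k" for n
      using legal that rule by (auto simp: U_t shrinking_rule_def)
    show "W U" if "\<forall>n. beta_legal S x V U n"
    proof -
      have "R 0 None (t 0)" using legal[of 0] that state[of 0] by simp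
      moreover have "R (Suc n) (Some (t n)) (t (Suc n))" for n
        using legal[of "Suc n"] that state[of "Suc n"] by simp
      ultimately have "W (\<lambda>n. N (t n))" by (rule win)
      moreover have "U = (\<lambda>n. N (t n))" using U_t by blast
      ultimately show ?thesis by simp
    qed
  qed
  then show ?thesis by blast
qed

lemma shrinking_rule_homeomorphic_maps:
  assumes hm: "homeomorphic_maps X S f g" and rule: "shrinking_rule S N R"
  shows "shrinking_rule X (\<lambda>t. g ` N t) R"
proof -
  have f: "homeomorphic_map X S f" and g: "homeomorphic_map S X g"
    and gf: "\<And>x. x \<in> topspace X \<Longrightarrow> g (f x) = x" and fg: "\<And>y. y \<in> topspace S \<Longrightarrow> f (g y) = y"
    using hm by (auto simp: homeomorphic_maps_map)
  have N: "openin S (N t)" for t using rule by (simp add: shrinking_rule_def)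
  have "openin X (g ` N t)" for t
    using homeomorphic_map_openness[OF g openin_subset[OF N]] N by blast
  moreover have "\<exists>t. R n prev t \<and> a \<in> g ` N t \<and> g ` N t \<subseteq> B"
    if B: "openin X B" "a \<in> B" and prev: "\<forall>p. prev = Some p \<longrightarrow> a \<in> g ` N p" for n prev a B
  proof -
    have Btop: "B \<subseteq> topspace X" using B(1) by (rule openin_subset)
    have "openin S (f ` B)" using homeomorphic_map_openness[OF f Btop] B(1) by blast
    moreover have "f a \<in> f ` B" using B(2) by blast
    moreover have "f a \<in> N p" if "prev = Some p" for p
      using prev that fg openin_subset[OF N[of p]] by auto
    ultimately obtain t where t: "R n prev t" "f a \<in> N t" "N t \<subseteq> f ` B"
      using rule unfolding shrinking_rule_def by blast
    have "a \<in> g ` N t" using t(2) gf Btop B(2) by (metis image_eqI subsetD)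
    moreover have "g ` N t \<subseteq> g ` f ` B" using t(3) by (rule image_mono)
    moreover have "g ` f ` B = B" using gf Btop by (force simp: image_image)
    ultimately show ?thesis using t(1) by auto
  qed
  ultimately show ?thesis unfolding shrinking_rule_def by blast
qed

lemma saturated_in_iff:
  "saturated_in X Q \<longleftrightarrow>
     Q \<subseteq> topspace X \<and> (\<forall>p\<in>topspace X. (\<forall>U. openin X U \<and> Q \<subseteq> U \<longrightarrow> p \<in> U) \<longrightarrow> p \<in> Q)"
proof
  assume "saturated_in X Q"
  then show "Q \<subseteq> topspace X \<and> (\<forall>p\<in>topspace X. (\<forall>U. openin X U \<and> Q \<subseteq> U \<longrightarrow> p \<in> U) \<longrightarrow> p \<in> Q)"
    unfolding saturated_in_def by blast
next
  assume Q: "Q \<subseteq> topspace X \<and> (\<forall>p\<in>topspace X. (\<forall>U. openin X U \<and> Q \<subseteq> U \<longrightarrow> p \<in> U) \<longrightarrow> p \<in> Q)"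
  have "\<Inter>{U. openin X U \<and> Q \<subseteq> U} \<subseteq> topspace X"
    using Q by blast
  with Q show "saturated_in X Q"
    unfolding saturated_in_def by blast
qed

lemma saturated_in_INT:
  assumes "I \<noteq> {}" and "\<And>i. i \<in> I \<Longrightarrow> saturated_in X (K i)"
  shows "saturated_in X (\<Inter>i\<in>I. K i)"
  unfolding saturated_in_iff
proof (intro conjI ballI impI INT_I)
  show "(\<Inter>i\<in>I. K i) \<subseteq> topspace X"
    using assms unfolding saturated_in_iff by blast
  fix p i assume p: "p \<in> topspace X" and in_open: "\<forall>U. openin X U \<and> (\<Inter>i\<in>I. K i) \<subseteq> U \<longrightarrow> p \<in> U"
    and i: "i \<in> I"
  have "p \<in> U" if "openin X U" "K i \<subseteq> U" for U
    using in_open that i by blast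
  then show "p \<in> K i" using assms(2)[OF i] p unfolding saturated_in_iff by blast
qed

lemma saturated_in_subtopology:
  assumes "saturated_in X Q" and "Q \<subseteq> H"
  shows "saturated_in (subtopology X H) Q"
  unfolding saturated_in_iff
proof (intro conjI ballI impI)
  show "Q \<subseteq> topspace (subtopology X H)"
    using assms by (auto simp: saturated_in_def)
  fix p assume p: "p \<in> topspace (subtopology X H)"
    and in_open: "\<forall>U. openin (subtopology X H) U \<and> Q \<subseteq> U \<longrightarrow> p \<in> U"
  have "p \<in> U" if "openin X U" "Q \<subseteq> U" for U
    using in_open openin_subtopology_Int[OF that(1)] that(2) \<open>Q \<subseteq> H\<close> by blast
  then show "p \<in> Q" using assms(1) p unfolding saturated_in_iff by auto
qed

lemma saturated_in_homeomorphic_image: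
  assumes hm: "homeomorphic_maps X S f g" and sat: "saturated_in S Q"
  shows "saturated_in X (g ` Q)"
proof -
  have g: "homeomorphic_map S X g"
    and gf: "\<And>x. x \<in> topspace X \<Longrightarrow> g (f x) = x" and fg: "\<And>y. y \<in> topspace S \<Longrightarrow> f (g y) = y"
    using hm by (auto simp: homeomorphic_maps_map)
  have Q: "Q \<subseteq> topspace S" using sat by (simp add: saturated_in_def)
  show ?thesis
    unfolding saturated_in_iff
  proof (intro conjI ballI impI)
    show "g ` Q \<subseteq> topspace X"
      using Q hm by (auto simp: homeomorphic_maps_def dest: continuous_map_image_subset_topspace)
    fix p assume p: "p \<in> topspace X" and in_open: "\<forall>U. openin X U \<and> g ` Q \<subseteq> U \<longrightarrow> p \<in> U"
    have "f p \<in> T" if "openin S T" "Q \<subseteq> T" for T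
    proof -
      have "p \<in> g ` T"
        using in_open that homeomorphic_map_openness[OF g openin_subset[OF that(1)]] by blast
      then show ?thesis using fg openin_subset[OF that(1)] by auto
    qed
    moreover have "f p \<in> topspace S"
      using p hm by (auto simp: homeomorphic_maps_def dest: continuous_map_image_subset_topspace)
    ultimately have "f p \<in> Q" using sat unfolding saturated_in_iff by blast
    then show "p \<in> g ` Q" using gf[OF p] by (metis image_eqI)
  qed
qed

lemma neighbourhood_base_homeomorphic_image:
  assumes hm: "homeomorphic_maps X S f g" and Q: "Q \<subseteq> topspace S"
    and base: "\<And>W. openin S W \<Longrightarrow> Q \<subseteq> W \<Longrightarrow> \<exists>n. U n \<subseteq> W"
    and W: "openin X W" "g ` Q \<subseteq> W"
  shows "\<exists>n. g ` U n \<subseteq> W"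
proof -
  have f: "homeomorphic_map X S f"
    and gf: "\<And>x. x \<in> topspace X \<Longrightarrow> g (f x) = x" and fg: "\<And>y. y \<in> topspace S \<Longrightarrow> f (g y) = y"
    using hm by (auto simp: homeomorphic_maps_map)
  have Wtop: "W \<subseteq> topspace X" using W(1) by (rule openin_subset)
  have "openin S (f ` W)" using homeomorphic_map_openness[OF f Wtop] W(1) by simp
  moreover have "Q \<subseteq> f ` W"
  proof
    fix q assume "q \<in> Q"
    then have "q = f (g q)" "g q \<in> W" using Q W(2) fg by auto
    then show "q \<in> f ` W" by (rule image_eqI)
  qed
  ultimately obtain n where "U n \<subseteq> f ` W" using base by blast
  then have "g ` U n \<subseteq> g ` f ` W" by (rule image_mono)
  also have "\<dots> = W" using gf Wtop by (force simp: image_image)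
  finally show ?thesis by blast
qed

lemma way_belowD: "way_below x y \<Longrightarrow> directed D \<Longrightarrow> is_lub D s \<Longrightarrow> y \<le> s \<Longrightarrow> \<exists>d\<in>D. x \<le> d"
  unfolding way_below_def by blast

lemma way_below_imp_le: "way_below x y \<Longrightarrow> (x::'a::order) \<le> y"
proof -
  assume "way_below x y"
  moreover have "directed {y}" "is_lub {y} y" by (auto simp: directed_def is_lub_def)
  ultimately show "x \<le> y" using way_belowD by blast
qed

lemma way_below_mono:
  assumes "(a::'a::order) \<le> x" and "way_below x y" and "y \<le> b"
  shows "way_below a b"
  unfolding way_below_def
proof (intro allI impI)
  fix D s assume "directed D" "is_lub D s" "b \<le> s"
  moreover have "y \<le> s" using assms(3) \<open>b \<le> s\<close> by (rule order.trans)
  ultimately obtain d where "d \<in> D" "x \<le> d" using way_belowD[OF assms(2)] by blast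
  then show "\<exists>d\<in>D. a \<le> d" using assms(1) order.trans by blast
qed

lemma scott_open_upclosed: "scott_open U \<Longrightarrow> x \<in> U \<Longrightarrow> x \<le> y \<Longrightarrow> y \<in> U"
  unfolding scott_open_def by blast

lemma scott_open_meets_directed: "scott_open U \<Longrightarrow> directed D \<Longrightarrow> is_lub D s \<Longrightarrow> s \<in> U \<Longrightarrow> \<exists>d\<in>D. d \<in> U"
  unfolding scott_open_def by blast

lemma continuous_dcpo_approximants:
  assumes "continuous_dcpo TYPE('a::order)"
  shows "directed {y. way_below y (x::'a)}" "is_lub {y. way_below y x} x"
  using assms unfolding continuous_dcpo_def by auto

lemma way_below_way_below_approximants:
  fixes x :: "'a::order"
  assumes cd: "continuous_dcpo TYPE('a)"
  defines "D \<equiv> {w. \<exists>z. way_below w z \<and> way_below z x}"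
  shows "directed D" "is_lub D x"
proof -
  note approx = continuous_dcpo_approximants[OF cd]
  show "directed D"
    unfolding directed_def
  proof (intro conjI ballI)
    obtain z w where "way_below z x" "way_below w z"
      using approx(1)[of x] approx(1) unfolding directed_def by blast
    then show "D \<noteq> {}" unfolding D_def by blast
  next
    fix w1 w2 assume "w1 \<in> D" "w2 \<in> D"
    then obtain z1 z2 where h: "way_below w1 z1" "way_below z1 x" "way_below w2 z2" "way_below z2 x"
      unfolding D_def by blast
    obtain z where z: "way_below z x" "z1 \<le> z" "z2 \<le> z"
      using approx(1)[of x] h unfolding directed_def by blast
    have "way_below w1 z" "way_below w2 z"
      using way_below_mono[OF order_refl h(1) z(2)] way_below_mono[OF order_refl h(3) z(3)] .
    then obtain d1 d2 where "way_below d1 z" "w1 \<le> d1" "way_below d2 z" "w2 \<le> d2"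
      using way_belowD[OF _ approx[of z] order_refl] by blast
    then obtain d where "way_below d z" "d1 \<le> d" "d2 \<le> d"
      using approx(1)[of z] unfolding directed_def by blast
    with \<open>w1 \<le> d1\<close> \<open>w2 \<le> d2\<close> have "way_below d z" "w1 \<le> d" "w2 \<le> d"
      by (blast dest: order.trans)+
    then show "\<exists>d\<in>D. w1 \<le> d \<and> w2 \<le> d" using z(1) unfolding D_def by blast
  qed
  show "is_lub D x"
    unfolding is_lub_def
  proof (intro conjI allI impI ballI)
    show "w \<le> x" if w: "w \<in> D" for w
    proof -
      obtain z where "way_below w z" "way_below z x" using w unfolding D_def by blast
      then show ?thesis using way_below_imp_le order.trans by blast
    qed
  next
    fix u assume u: "\<forall>w\<in>D. w \<le> u"
    have "z \<le> u" if "way_below z x" for z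
      using approx(2)[of z] u that unfolding is_lub_def D_def by blast
    then show "x \<le> u" using approx(2)[of x] unfolding is_lub_def by blast
  qed
qed

lemma way_below_interpolate:
  assumes cd: "continuous_dcpo TYPE('a::order)" and yx: "way_below y (x::'a)"
  obtains z where "way_below y z" "way_below z x"
proof -
  obtain d z where "y \<le> d" "way_below d z" "way_below z x"
    using way_belowD[OF yx way_below_way_below_approximants[OF cd] order_refl] by blast
  then show ?thesis using that way_below_mono[OF \<open>y \<le> d\<close> _ order_refl] by blast
qed

lemma scott_open_way_below_upset:
  assumes "continuous_dcpo TYPE('a::order)"
  shows "scott_open {z::'a. way_below y z}"
  unfolding scott_open_def
proof (intro conjI allI impI)
  show "b \<in> {z. way_below y z}" if "a \<in> {z. way_below y z}" "a \<le> b" for a b :: 'a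
    using that way_below_mono[OF order_refl] by blast
next
  fix D and s :: 'a assume D: "directed D" "is_lub D s" "s \<in> {z. way_below y z}"
  then obtain z where z: "way_below y z" "way_below z s"
    using way_below_interpolate[OF assms] by blast
  then obtain d where "d \<in> D" "z \<le> d" using way_belowD[OF z(2) D(1,2) order_refl] by blast
  then show "D \<inter> {z. way_below y z} \<noteq> {}"
    using way_below_mono[OF order_refl z(1)] by blast
qed

lemma scott_open_way_below_approximant:
  assumes "continuous_dcpo TYPE('a::order)" and "scott_open U" and "(x::'a) \<in> U"
  obtains y where "way_below y x" "y \<in> U"
  using scott_open_meets_directed[OF assms(2) continuous_dcpo_approximants[OF assms(1)] assms(3)]
  by blast

lemma way_below_chain_converges:
  fixes y :: "nat \<Rightarrow> 'a::order"
  assumes dcpo: "dcpo TYPE('a)" and chain: "\<And>n. way_below (y n) (y (Suc n))"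
  obtains z where "\<And>n. way_below (y n) z" "\<And>U. scott_open U \<Longrightarrow> z \<in> U \<Longrightarrow> \<exists>n. y n \<in> U"
proof -
  have mono: "y m \<le> y n" if "m \<le> n" for m n
    using lift_Suc_mono_le[of y, OF way_below_imp_le[OF chain] that] .
  have dir: "directed (range y)"
    unfolding directed_def by (auto intro: mono max.cobounded1 max.cobounded2)
  then obtain z where z: "is_lub (range y) z" using dcpo unfolding dcpo_def by blast
  have "way_below (y n) z" for n
    using way_below_mono[OF order_refl chain[of n]] z unfolding is_lub_def by blast
  moreover have "\<exists>n. y n \<in> U" if "scott_open U" "z \<in> U" for U
    using scott_open_meets_directed[OF that(1) dir z that(2)] by blast
  ultimately show ?thesis using that by blast
qed

lemma shrinking_rule_scott_subspace:
  fixes W :: "nat \<Rightarrow> 'a::order set"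
  assumes cd: "continuous_dcpo TYPE('a)" and W: "\<And>n. scott_open (W n)" and G: "G \<subseteq> (\<Inter>n. W n)"
  shows "shrinking_rule (subtopology scott_topology G) (\<lambda>y. {z. way_below y z} \<inter> G)
           (\<lambda>n prev y. y \<in> W n \<and> (\<forall>p. prev = Some p \<longrightarrow> way_below p y))"
  unfolding shrinking_rule_def
proof (intro conjI allI impI)
  show "openin (subtopology scott_topology G) ({z. way_below y z} \<inter> G)" for y
    using scott_open_way_below_upset[OF cd]
    by (simp add: openin_subtopology_Int openin_scott_topology)
  fix n prev a B
  assume "openin (subtopology scott_topology G) B \<and> a \<in> B \<and>
    (\<forall>p. prev = Some p \<longrightarrow> a \<in> {z. way_below p z} \<inter> G)"
  then obtain T where T: "scott_open T" "B = T \<inter> G" and a: "a \<in> B"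
    and prev: "\<And>p. prev = Some p \<Longrightarrow> way_below p a"
    by (auto simp: openin_subtopology openin_scott_topology)
  define A where "A = (case prev of None \<Rightarrow> UNIV | Some p \<Rightarrow> {z. way_below p z})"
  have "scott_open A"
  proof (cases prev)
    case None
    then show ?thesis by (auto simp: A_def scott_open_def directed_def)
  next
    case (Some p)
    then show ?thesis using scott_open_way_below_upset[OF cd] by (simp add: A_def)
  qed
  then have "scott_open (T \<inter> W n \<inter> A)"
    using T(1) W[of n] openin_Int[of scott_topology] by (metis openin_scott_topology)
  moreover have "a \<in> T \<inter> W n \<inter> A" using a T(2) G prev by (auto simp: A_def split: option.split)
  ultimately obtain y where y: "way_below y a" "y \<in> T \<inter> W n \<inter> A"
    by (rule scott_open_way_below_approximant[OF cd])
  have "{z. way_below y z} \<inter> G \<subseteq> B"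
    using T y(2) scott_open_upclosed way_below_imp_le by blast
  then show "\<exists>y. (y \<in> W n \<and> (\<forall>p. prev = Some p \<longrightarrow> way_below p y)) \<and>
             a \<in> {z. way_below y z} \<inter> G \<and> {z. way_below y z} \<inter> G \<subseteq> B"
    using y a T(2) by (auto simp: A_def)
qed

lemma topspace_scott_topology: "topspace (scott_topology :: 'a::order topology) = UNIV"
proof -
  have "scott_open (UNIV :: 'a set)" by (auto simp: scott_open_def directed_def)
  then show ?thesis by (metis openin_scott_topology openin_subset top.extremum_uniqueI)
qed

lemma scott_subspace_limit_of_way_below_chain:
  fixes y :: "nat \<Rightarrow> 'a::order"
  assumes dcpo: "dcpo TYPE('a)" and W: "\<And>n. scott_open (W n)" "(\<Inter>n. W n) \<subseteq> G"
    and y: "\<And>n. y n \<in> W n" "\<And>n. way_below (y n) (y (Suc n))"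
  obtains p where "p \<in> G" "\<And>n. p \<in> {z. way_below (y n) z} \<inter> G"
    "\<And>V. openin (subtopology scott_topology G) V \<Longrightarrow> p \<in> V \<Longrightarrow> \<exists>n. {z. way_below (y n) z} \<inter> G \<subseteq> V"
proof -
  obtain p where p: "\<And>n. way_below (y n) p" "\<And>U. scott_open U \<Longrightarrow> p \<in> U \<Longrightarrow> \<exists>n. y n \<in> U"
    using way_below_chain_converges[of y, OF dcpo y(2)] by blast
  have "p \<in> W n" for n
    using scott_open_upclosed[OF W(1) y(1) way_below_imp_le[OF p(1)]] .
  then have pG: "p \<in> G" using W(2) by blast
  have "\<exists>n. {z. way_below (y n) z} \<inter> G \<subseteq> V"
    if V: "openin (subtopology scott_topology G) V" "p \<in> V" for V
  proof -
    obtain T where T: "scott_open T" "V = T \<inter> G"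
      using V(1) unfolding openin_subtopology openin_scott_topology by blast
    then obtain n where "y n \<in> T" using p(2) V(2) by blast
    then have "{z. way_below (y n) z} \<inter> G \<subseteq> V"
      using T scott_open_upclosed way_below_imp_le by blast
    then show ?thesis ..
  qed
  then show ?thesis using that pG p(1) by blast
qed

lemma convergence_choquet_complete_if_domain_complete:
  fixes X :: "'a topology" and G :: "'b::order set"
  assumes cd: "continuous_dcpo TYPE('b)" and gd: "gdelta_in scott_topology G"
    and hs: "X homeomorphic_space subtopology scott_topology G"
  shows "convergence_choquet_complete X"
proof -
  obtain W :: "nat \<Rightarrow> 'b set" where W: "\<And>n. scott_open (W n)" "(\<Inter>n. W n) = G"
    using gd unfolding gdelta_in_descending openin_scott_topology by blast
  obtain f g where hm: "homeomorphic_maps X (subtopology scott_topology G) f g"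
    using hs homeomorphic_space_def by blast
  define N where "N y = {z. way_below y z} \<inter> G" for y
  have rule: "shrinking_rule X (\<lambda>y. g ` N y)
      (\<lambda>n prev y. y \<in> W n \<and> (\<forall>p. prev = Some p \<longrightarrow> way_below p y))"
    unfolding N_def using W(2)
    by (intro shrinking_rule_homeomorphic_maps[OF hm] shrinking_rule_scott_subspace[OF cd W(1)]) blast
  have "\<exists>\<sigma>. alpha_wins_with X \<sigma> (\<lambda>U. \<exists>q\<in>topspace X. (\<forall>n. q \<in> U n) \<and>
          (\<forall>V. openin X V \<and> q \<in> V \<longrightarrow> (\<exists>n. U n \<subseteq> V)))"
  proof (rule alpha_wins_with_shrinking_rule[OF rule])
    fix y :: "nat \<Rightarrow> 'b"
    assume y0: "y 0 \<in> W 0 \<and> (\<forall>p. None = Some p \<longrightarrow> way_below p (y 0))"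
      and ySuc: "\<And>n. y (Suc n) \<in> W (Suc n) \<and> (\<forall>p. Some (y n) = Some p \<longrightarrow> way_below p (y (Suc n)))"
    have y_W: "y n \<in> W n" for n using y0 ySuc by (cases n) auto
    have y_wb: "way_below (y n) (y (Suc n))" for n using ySuc by blast
    have dcpo: "dcpo TYPE('b)" using cd by (simp add: continuous_dcpo_def)
    have "(\<Inter>n. W n) \<subseteq> G" using W(2) by simp
    then obtain p where p: "p \<in> G" "\<And>n. p \<in> N (y n)"
      and base: "\<And>V. openin (subtopology scott_topology G) V \<Longrightarrow> p \<in> V \<Longrightarrow> \<exists>n. N (y n) \<subseteq> V"
      using scott_subspace_limit_of_way_below_chain[of W G y, OF dcpo W(1) _ y_W y_wb]
      unfolding N_def by blast
    have "g p \<in> topspace X"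
      using hm p(1) unfolding homeomorphic_maps_def continuous_map_def
      by (auto simp: topspace_scott_topology)
    moreover have "\<exists>n. g ` N (y n) \<subseteq> V" if "openin X V" "g p \<in> V" for V
      using neighbourhood_base_homeomorphic_image[OF hm, of "{p}" "\<lambda>n. N (y n)" V] base that p(1)
      by (simp add: topspace_scott_topology)
    ultimately show "\<exists>q\<in>topspace X. (\<forall>n. q \<in> g ` N (y n)) \<and>
        (\<forall>V. openin X V \<and> q \<in> V \<longrightarrow> (\<exists>n. g ` N (y n) \<subseteq> V))"
      using p(2) by blast
  qed
  then show ?thesis by (simp add: convergence_choquet_complete_def)
qed

lemma maximal_open_avoiding_compacts:
  assumes cpt: "\<And>n. compactin Z (Q n)" and W: "openin Z W" "\<And>n. \<not> Q n \<subseteq> W"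
  obtains P where "openin Z P" "W \<subseteq> P" "\<And>n. \<not> Q n \<subseteq> P"
    "\<And>U. openin Z U \<Longrightarrow> \<not> U \<subseteq> P \<Longrightarrow> \<exists>n. Q n \<subseteq> P \<union> U"
proof -
  define M where "M = {P. openin Z P \<and> W \<subseteq> P \<and> (\<forall>n. \<not> Q n \<subseteq> P)}"
  have "\<Union>\<C> \<in> M" if C: "\<C> \<noteq> {}" "subset.chain M \<C>" for \<C>
  proof -
    have CM: "\<C> \<subseteq> M" using C(2) unfolding subset_chain_def by blast
    then have open_C: "openin Z (\<Union>\<C>)" unfolding M_def by blast
    have "\<not> Q n \<subseteq> \<Union>\<C>" for n
    proof
      assume "Q n \<subseteq> \<Union>\<C>"
      moreover have "\<forall>U\<in>\<C>. openin Z U" using CM unfolding M_def by blast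
      ultimately obtain \<F> where \<F>: "finite \<F>" "\<F> \<subseteq> \<C>" "Q n \<subseteq> \<Union>\<F>"
        using cpt[of n] unfolding compactin_def by blast
      show False
      proof (cases "\<F> = {}")
        case True
        then show False using \<F>(3) W(2)[of n] by blast
      next
        case False
        have "subset.chain M \<F>"
          using C(2) \<F>(2) CM unfolding subset_chain_def by (meson subsetD subset_trans)
        then have "\<Union>\<F> \<in> M" using Union_in_chain[OF \<F>(1) False] \<F>(2) CM by blast
        then show False using \<F>(3) unfolding M_def by blast
      qed
    qed
    then show ?thesis using open_C CM C(1) unfolding M_def by blast
  qed
  moreover have "W \<in> M" using W unfolding M_def by blast
  ultimately obtain P where P: "P \<in> M" and maximal: "\<And>P'. P' \<in> M \<Longrightarrow> P \<subseteq> P' \<Longrightarrow> P' = P"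
    using subset_Zorn_nonempty[of M] by blast
  have "\<exists>n. Q n \<subseteq> P \<union> U" if "openin Z U" "\<not> U \<subseteq> P" for U
  proof (rule ccontr)
    assume "\<nexists>n. Q n \<subseteq> P \<union> U"
    then have "P \<union> U \<in> M" using P that(1) unfolding M_def by blast
    then show False using maximal[of "P \<union> U"] that(2) by blast
  qed
  then show ?thesis using that P unfolding M_def by blast
qed

lemma irreducible_closed_in_complement:
  assumes P: "openin Z P" and Q0: "Q 0 \<subseteq> topspace Z"
    and dec: "\<And>n. Q (Suc n) \<subseteq> Q n" and avoid: "\<And>n. \<not> Q n \<subseteq> P"
    and maximal: "\<And>U. openin Z U \<Longrightarrow> \<not> U \<subseteq> P \<Longrightarrow> \<exists>n. Q n \<subseteq> P \<union> U"
  shows "irreducible_closed_in Z (topspace Z - P)"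
  unfolding irreducible_closed_in_def
proof (intro conjI allI impI)
  show "closedin Z (topspace Z - P)" using P by blast
  show "topspace Z - P \<noteq> {}" using Q0 avoid[of 0] by blast
  fix A B assume A: "closedin Z A" and B: "closedin Z B" and cover: "topspace Z - P \<subseteq> A \<union> B"
  show "topspace Z - P \<subseteq> A \<or> topspace Z - P \<subseteq> B"
  proof (rule ccontr)
    assume "\<not> ?thesis"
    then have "\<not> topspace Z - A \<subseteq> P" "\<not> topspace Z - B \<subseteq> P" by blast+
    moreover have "openin Z (topspace Z - A)" "openin Z (topspace Z - B)"
      using A B unfolding closedin_def by blast+
    ultimately obtain m n where m: "Q m \<subseteq> P \<union> (topspace Z - A)" and n: "Q n \<subseteq> P \<union> (topspace Z - B)"
      using maximal by meson
    have antimono: "Q k \<subseteq> Q j" if "j \<le> k" for j k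
      using lift_Suc_antimono_le[of Q, OF dec that] .
    have "Q (max m n) \<subseteq> topspace Z \<inter> (P \<union> (topspace Z - A)) \<inter> (P \<union> (topspace Z - B))"
      using antimono[of 0 "max m n"] antimono[of m "max m n"] antimono[of n "max m n"] Q0 m n
      by auto
    then have "Q (max m n) \<subseteq> P" using cover by blast
    then show False using avoid by blast
  qed
qed

lemma sober_space_compact_chain_subset_open:
  assumes sober: "sober_space Z" and cpt: "\<And>n. compactin Z (Q n)"
    and dec: "\<And>n. Q (Suc n) \<subseteq> Z interior_of Q n"
    and W: "openin Z W" "(\<Inter>n. Q n) \<subseteq> W"
  shows "\<exists>n. Q n \<subseteq> W"
proof (rule ccontr)
  assume "\<nexists>n. Q n \<subseteq> W"
  then have "\<And>n. \<not> Q n \<subseteq> W" by blast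
  then obtain P where P: "openin Z P" "W \<subseteq> P" "\<And>n. \<not> Q n \<subseteq> P"
    and maximal: "\<And>U. openin Z U \<Longrightarrow> \<not> U \<subseteq> P \<Longrightarrow> \<exists>n. Q n \<subseteq> P \<union> U"
    using maximal_open_avoiding_compacts[of Z Q W, OF cpt W(1)] by blast
  have dec': "Q (Suc n) \<subseteq> Q n" for n using dec[of n] interior_of_subset[of Z "Q n"] by blast
  have "irreducible_closed_in Z (topspace Z - P)"
    by (rule irreducible_closed_in_complement[OF P(1) compactin_subset_topspace[OF cpt[of 0]] dec'
          P(3) maximal])
  then have "\<exists>!x. x \<in> topspace Z \<and> topspace Z - P = Z closure_of {x}"
    using sober unfolding sober_space_def by simp
  then obtain x where x: "x \<in> topspace Z" "topspace Z - P = Z closure_of {x}"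
    by blast
  have x_in: "x \<in> U" if U: "openin Z U" "\<not> U \<subseteq> P" for U
  proof (rule ccontr)
    assume "x \<notin> U"
    then have "U \<inter> Z closure_of {x} = {}" using openin_Int_closure_of_eq_empty[OF U(1)] by blast
    then show False using U x(2) openin_subset[OF U(1)] by blast
  qed
  have "x \<in> Q n" for n
  proof -
    have "\<not> Z interior_of Q n \<subseteq> P" using dec[of n] P(3)[of "Suc n"] by blast
    then show ?thesis using x_in[OF openin_interior_of] interior_of_subset[of Z "Q n"] by blast
  qed
  moreover have "x \<notin> P" using x closure_of_subset[of "{x}" Z] by blast
  ultimately show False using W(2) P(2) by blast
qed

lemma compactin_INT_compact_chain:
  assumes sober: "sober_space Z" and cpt: "\<And>n. compactin Z (Q n)"
    and dec: "\<And>n. Q (Suc n) \<subseteq> Z interior_of Q n"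
  shows "compactin Z (\<Inter>n. Q n)"
  unfolding compactin_def
proof (intro conjI allI impI)
  show "(\<Inter>n. Q n) \<subseteq> topspace Z" using compactin_subset_topspace[OF cpt[of 0]] by blast
  fix \<U> assume \<U>: "(\<forall>U\<in>\<U>. openin Z U) \<and> (\<Inter>n. Q n) \<subseteq> \<Union>\<U>"
  then have "openin Z (\<Union>\<U>)" by (simp add: openin_Union)
  then obtain n where "Q n \<subseteq> \<Union>\<U>"
    using sober_space_compact_chain_subset_open[of Z Q, OF sober cpt dec] \<U> by blast
  then obtain \<F> where "finite \<F>" "\<F> \<subseteq> \<U>" "Q n \<subseteq> \<Union>\<F>"
    using cpt[of n] \<U> unfolding compactin_def by meson
  moreover have "(\<Inter>n. Q n) \<subseteq> Q n" by blast
  ultimately show "\<exists>\<F>. finite \<F> \<and> \<F> \<subseteq> \<U> \<and> (\<Inter>n. Q n) \<subseteq> \<Union>\<F>" by blast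
qed

lemma shrinking_rule_locally_compact_subspace:
  assumes lc: "locally_compact_sat Z" and W: "\<And>n. openin Z (W n)" and H: "H \<subseteq> (\<Inter>n. W n)"
  shows "shrinking_rule (subtopology Z H) (\<lambda>K. Z interior_of K \<inter> H)
           (\<lambda>n prev K. compactin Z K \<and> saturated_in Z K \<and> K \<noteq> {} \<and> K \<subseteq> W n \<and>
                       (\<forall>K'. prev = Some K' \<longrightarrow> K \<subseteq> Z interior_of K'))"
  unfolding shrinking_rule_def
proof (intro conjI allI impI)
  show "openin (subtopology Z H) (Z interior_of K \<inter> H)" for K
    by (simp add: openin_subtopology_Int)
  fix n prev a B
  assume "openin (subtopology Z H) B \<and> a \<in> B \<and> (\<forall>K'. prev = Some K' \<longrightarrow> a \<in> Z interior_of K' \<inter> H)"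
  then obtain T where T: "openin Z T" "B = T \<inter> H" and a: "a \<in> B"
    and prev: "\<And>K'. prev = Some K' \<Longrightarrow> a \<in> Z interior_of K'"
    unfolding openin_subtopology by blast
  define A where "A = (case prev of None \<Rightarrow> topspace Z | Some K' \<Rightarrow> Z interior_of K')"
  have "openin Z A" by (cases prev) (simp_all add: A_def)
  then have "openin Z (T \<inter> W n \<inter> A)" using T(1) W[of n] by (intro openin_Int)
  moreover have "a \<in> T \<inter> W n \<inter> A"
    using a T H prev openin_subset[OF T(1)] by (auto simp: A_def split: option.split)
  ultimately obtain K
    where K: "compactin Z K" "saturated_in Z K" "a \<in> Z interior_of K" "K \<subseteq> T \<inter> W n \<inter> A"
    using lc openin_subset[OF T(1)] unfolding locally_compact_sat_def by blast
  have "K \<noteq> {}" using K(3) interior_of_subset[of Z K] by blast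
  moreover have "Z interior_of K \<inter> H \<subseteq> B" using K(4) T(2) interior_of_subset[of Z K] by blast
  moreover have "K \<subseteq> Z interior_of K'" if "prev = Some K'" for K'
    using K(4) that by (simp add: A_def)
  ultimately show "\<exists>K. (compactin Z K \<and> saturated_in Z K \<and> K \<noteq> {} \<and> K \<subseteq> W n \<and>
                       (\<forall>K'. prev = Some K' \<longrightarrow> K \<subseteq> Z interior_of K')) \<and>
             a \<in> Z interior_of K \<inter> H \<and> Z interior_of K \<inter> H \<subseteq> B"
    using K a T(2) by blast
qed

lemma sober_subspace_limit_of_compact_chain:
  assumes sober: "sober_space Z"
    and cpt: "\<And>n. compactin Z (K n)" and sat: "\<And>n. saturated_in Z (K n)"
    and ne: "\<And>n. K n \<noteq> {}" and dec: "\<And>n. K (Suc n) \<subseteq> Z interior_of K n" and H: "(\<Inter>n. K n) \<subseteq> H"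
  shows "(\<Inter>n. K n) \<noteq> {}" "compactin (subtopology Z H) (\<Inter>n. K n)"
    "saturated_in (subtopology Z H) (\<Inter>n. K n)" "\<And>m. (\<Inter>n. K n) \<subseteq> Z interior_of K m \<inter> H"
    "\<And>V. openin (subtopology Z H) V \<Longrightarrow> (\<Inter>n. K n) \<subseteq> V \<Longrightarrow> \<exists>m. Z interior_of K m \<inter> H \<subseteq> V"
proof -
  note eventually_inside = sober_space_compact_chain_subset_open[of Z K, OF sober cpt dec]
  show "(\<Inter>n. K n) \<noteq> {}" using eventually_inside[OF openin_empty] ne by blast
  show "compactin (subtopology Z H) (\<Inter>n. K n)"
    using compactin_INT_compact_chain[of Z K, OF sober cpt dec] H
    by (simp add: compactin_subtopology)
  show "saturated_in (subtopology Z H) (\<Inter>n. K n)"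
    using saturated_in_subtopology[OF saturated_in_INT[of UNIV Z K] H] sat by simp
  show "(\<Inter>n. K n) \<subseteq> Z interior_of K m \<inter> H" for m
    using dec[of m] H by blast
  show "\<exists>m. Z interior_of K m \<inter> H \<subseteq> V" if V: "openin (subtopology Z H) V" "(\<Inter>n. K n) \<subseteq> V" for V
  proof -
    obtain T where T: "openin Z T" "V = T \<inter> H" using V(1) unfolding openin_subtopology by blast
    moreover have "(\<Inter>n. K n) \<subseteq> T" using V(2) T(2) by blast
    ultimately obtain m where "K m \<subseteq> T" using eventually_inside by blast
    then have "Z interior_of K m \<inter> H \<subseteq> V" using T(2) interior_of_subset[of Z "K m"] by blast
    then show ?thesis ..
  qed
qed

lemma compactly_choquet_complete_if_lcs_complete:
  fixes Y :: "'a topology" and Z :: "'b topology" and H :: "'b set"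
  assumes sober: "sober_space Z" and lc: "locally_compact_sat Z" and gd: "gdelta_in Z H"
    and hs: "Y homeomorphic_space subtopology Z H"
  shows "compactly_choquet_complete Y"
proof -
  obtain W :: "nat \<Rightarrow> 'b set" where W: "\<And>n. openin Z (W n)" "(\<Inter>n. W n) = H"
    using gd unfolding gdelta_in_descending by blast
  obtain f g where hm: "homeomorphic_maps Y (subtopology Z H) f g"
    using hs homeomorphic_space_def by blast
  define N where "N K = Z interior_of K \<inter> H" for K
  have rule: "shrinking_rule Y (\<lambda>K. g ` N K)
      (\<lambda>n prev K. compactin Z K \<and> saturated_in Z K \<and> K \<noteq> {} \<and> K \<subseteq> W n \<and>
                  (\<forall>K'. prev = Some K' \<longrightarrow> K \<subseteq> Z interior_of K'))"
    unfolding N_def using W(2)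
    by (intro shrinking_rule_homeomorphic_maps[OF hm]
        shrinking_rule_locally_compact_subspace[OF lc W(1)]) blast
  have "\<exists>\<sigma>. alpha_wins_with Y \<sigma> (\<lambda>U. \<exists>Q. Q \<noteq> {} \<and> compactin Y Q \<and> saturated_in Y Q \<and>
          (\<forall>n. Q \<subseteq> U n) \<and> (\<forall>V. openin Y V \<and> Q \<subseteq> V \<longrightarrow> (\<exists>n. U n \<subseteq> V)))"
  proof (rule alpha_wins_with_shrinking_rule[OF rule])
    fix K :: "nat \<Rightarrow> 'b set"
    assume K0: "compactin Z (K 0) \<and> saturated_in Z (K 0) \<and> K 0 \<noteq> {} \<and> K 0 \<subseteq> W 0 \<and>
                (\<forall>K'. None = Some K' \<longrightarrow> K 0 \<subseteq> Z interior_of K')"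
      and KSuc: "\<And>n. compactin Z (K (Suc n)) \<and> saturated_in Z (K (Suc n)) \<and> K (Suc n) \<noteq> {} \<and>
                K (Suc n) \<subseteq> W (Suc n) \<and> (\<forall>K'. Some (K n) = Some K' \<longrightarrow> K (Suc n) \<subseteq> Z interior_of K')"
    have K: "compactin Z (K n)" "saturated_in Z (K n)" "K n \<noteq> {}" "K n \<subseteq> W n" for n
      using K0 KSuc by (cases n; simp)+
    have dec: "K (Suc n) \<subseteq> Z interior_of K n" for n using KSuc by blast
    define Q where "Q = (\<Inter>n. K n)"
    have "Q \<subseteq> H" using K(4) W(2) unfolding Q_def by blast
    note limit =
      sober_subspace_limit_of_compact_chain[of Z K H, OF sober K(1,2,3) dec, folded Q_def, OF this]
    have Qtop: "Q \<subseteq> topspace (subtopology Z H)"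
      using limit(2) by (rule compactin_subset_topspace)
    have base: "\<exists>m. N (K m) \<subseteq> V" if "openin (subtopology Z H) V" "Q \<subseteq> V" for V
      using limit(5)[OF that] unfolding N_def .
    show "\<exists>Q. Q \<noteq> {} \<and> compactin Y Q \<and> saturated_in Y Q \<and> (\<forall>n. Q \<subseteq> g ` N (K n)) \<and>
          (\<forall>V. openin Y V \<and> Q \<subseteq> V \<longrightarrow> (\<exists>n. g ` N (K n) \<subseteq> V))"
    proof (rule exI[of _ "g ` Q"], intro conjI allI impI)
      show "g ` Q \<noteq> {}" using limit(1) by blast
      show "compactin Y (g ` Q)"
        using image_compactin[OF limit(2)] hm unfolding homeomorphic_maps_def by blast
      show "saturated_in Y (g ` Q)" using saturated_in_homeomorphic_image[OF hm limit(3)] .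
      show "g ` Q \<subseteq> g ` N (K n)" for n using limit(4)[of n] unfolding N_def by (rule image_mono)
      show "\<exists>n. g ` N (K n) \<subseteq> V" if "openin Y V \<and> g ` Q \<subseteq> V" for V
        using neighbourhood_base_homeomorphic_image[OF hm Qtop base] that by blast
    qed
  qed
  then show ?thesis by (simp add: compactly_choquet_complete_def)
qed

theorem proposition9p1:
  fixes X :: "'a topology" and G :: "'b::order set"
    and Y :: "'c topology" and Z :: "'d topology" and H :: "'d set"
  shows "(continuous_dcpo TYPE('b) \<and> gdelta_in scott_topology G \<and>
            X homeomorphic_space subtopology scott_topology G
          \<longrightarrow> convergence_choquet_complete X) \<and>
         (sober_space Z \<and> locally_compact_sat Z \<and> gdelta_in Z H \<and>
            Y homeomorphic_space subtopology Z H
          \<longrightarrow> compactly_choquet_complete Y)"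
  using convergence_choquet_complete_if_domain_complete compactly_choquet_complete_if_lcs_complete
  by blast

end
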